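(* Suppose $\ell$ is a proper loss and fix $g\in\Delta_m$. Define $f^*:\mathcal{X}\to\Delta_m$ by $f^*_y(x)=\frac{\frac{g_y}{\pi_y}\eta_y(x)}{\sum_{j=1}^m\frac{g_j}{\pi_j}\eta_j(x)}$ at points where the denominator is positive, and $f^*(x)$ an arbitrary fixed element of $\Delta_m$ otherwise. Then $f^*$ minimizes $f\mapsto\sum_{i=1}^m g_i\,\ell_i(f)$ over all measurable $f:\mathcal{X}\to\Delta_m$.
   Context: $\mathcal{X}$ is a measurable space, $[m]=\{1,\dots,m\}$, $(X,Y)\sim\mathcal{D}$ on $\mathcal{X}\times[m]$, $\eta_y(x)=\mathbb{P}(Y=y\mid X=x)$, $\pi_y=\mathbb{P}(Y=y)>0$ for all $y$. $\Delta_m$ is the probability simplex in $\mathbb{R}^m$. A loss $\ell:[m]\times\Delta_m\to[0,\infty)$ is proper if for every $p\in\Delta_m$, $p\in\arg\min_{q\in\Delta_m}\sum_y p_y\ell(y,q)$. Per-class loss: $\ell_i(f)=\mathbb{E}[\ell(Y,f(X))\mid Y=i]$ for measurable $f:\mathcal{X}\to\Delta_m$. *)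

theory Defs
  imports "HOL-Analysis.Analysis" "HOL-Probability.Probability"
begin

text \<open>Labels [m] are the elements of a finite type 'm (so m = CARD('m)).
  The probability prob_simplex in R^m.\<close>
definition prob_simplex :: "(real ^ 'm::finite) set" where
  "prob_simplex = {p. (\<forall>i. 0 \<le> p $ i) \<and> (\<Sum>i\<in>UNIV. p $ i) = 1}"

definition proper_loss :: "('m::finite \<Rightarrow> real ^ 'm \<Rightarrow> real) \<Rightarrow> bool" where
  "proper_loss l \<longleftrightarrow> (\<forall>y q. q \<in> prob_simplex \<longrightarrow> 0 \<le> l y q) \<and>
     (\<forall>p\<in>prob_simplex. \<forall>q\<in>prob_simplex. (\<Sum>y\<in>UNIV. p $ y * l y p) \<le> (\<Sum>y\<in>UNIV. p $ y * l y q))"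

definition class_prior :: "('a \<times> 'm) measure \<Rightarrow> 'm \<Rightarrow> real" where
  "class_prior D y = measure D {z \<in> space D. snd z = y}"

text \<open>Per-class loss l_i(f) = E[l(Y, f X) | Y = i] (nonnegative, so valued in ennreal).\<close>
definition class_loss ::
  "('a \<times> 'm) measure \<Rightarrow> ('m \<Rightarrow> real ^ 'm \<Rightarrow> real) \<Rightarrow> ('a \<Rightarrow> real ^ 'm) \<Rightarrow> 'm \<Rightarrow> ennreal" where
  "class_loss D l f i =
     (\<integral>\<^sup>+ z. ennreal (l (snd z) (f (fst z))) * indicator {z. snd z = i} z \<partial>D)
       / emeasure D {z \<in> space D. snd z = i}"

definition weighted_loss ::
  "('a \<times> 'm::finite) measure \<Rightarrow> ('m \<Rightarrow> real ^ 'm \<Rightarrow> real) \<Rightarrow> real ^ 'm \<Rightarrow> ('a \<Rightarrow> real ^ 'm) \<Rightarrow> ennreal" where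
  "weighted_loss D l g f = (\<Sum>i\<in>UNIV. ennreal (g $ i) * class_loss D l f i)"

definition fstar ::
  "('a \<times> 'm::finite) measure \<Rightarrow> ('m \<Rightarrow> 'a \<Rightarrow> real) \<Rightarrow> real ^ 'm \<Rightarrow> real ^ 'm \<Rightarrow> 'a \<Rightarrow> real ^ 'm" where
  "fstar D \<eta> g c x =
     (let den = (\<Sum>j\<in>UNIV. g $ j / class_prior D j * \<eta> j x) in
      if den > 0 then (\<chi> y. (g $ y / class_prior D y * \<eta> y x) / den) else c)"

end

theory Submission
  imports Defs
begin

text \<open>After conditioning on the label, the objective becomes the integral, against the marginal
  of X, of the pointwise loss \<open>\<Sum>\<^sub>y w\<^sub>y(x) \<ell>(y, f x)\<close> with weights
  \<open>w\<^sub>y(x) = g\<^sub>y \<eta>\<^sub>y(x) / \<pi>\<^sub>y\<close>. Properness says that among all points of the simplex the normalised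
  weight vector minimises this pointwise loss, and that vector is exactly \<open>f\<^sup>*(x)\<close>; so \<open>f\<^sup>*\<close>
  wins pointwise, hence after integration.\<close>

lemma borel_measurable_vecI:
  fixes F :: "'b \<Rightarrow> real ^ 'n::finite"
  assumes "\<And>i. (\<lambda>x. F x $ i) \<in> borel_measurable N"
  shows "F \<in> borel_measurable N"
proof (rule iffD2[OF borel_measurable_euclidean_space], rule ballI)
  fix b :: "real ^ 'n" assume "b \<in> Basis"
  then obtain i where b: "b = axis i 1"
    unfolding Basis_vec_def by auto
  have "(\<lambda>x. F x \<bullet> b) = (\<lambda>x. F x $ i)"
    unfolding b by (simp only: cart_eq_inner_axis)
  then show "(\<lambda>x. F x \<bullet> b) \<in> borel_measurable N"
    using assms by simp
qed

lemma borel_measurable_comp_restrict_space: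
  assumes "h \<in> borel_measurable (restrict_space borel S)"
    and "f \<in> borel_measurable M" and "\<forall>x\<in>space M. f x \<in> S"
  shows "(\<lambda>x. h (f x)) \<in> borel_measurable M"
proof -
  have "f \<in> measurable M (restrict_space borel S)"
    using assms(2,3) by (intro measurable_restrict_space2) auto
  then show ?thesis
    using measurable_comp[OF _ assms(1)] by (simp add: o_def)
qed

definition normalize_weights :: "('m::finite \<Rightarrow> real) \<Rightarrow> real ^ 'm \<Rightarrow> real ^ 'm" where
  "normalize_weights w c = (if 0 < (\<Sum>j\<in>UNIV. w j) then (\<chi> y. w y / (\<Sum>j\<in>UNIV. w j)) else c)"

lemma normalize_weights_in_prob_simplex:
  assumes "\<And>y. 0 \<le> w y" and "c \<in> prob_simplex"
  shows "normalize_weights w c \<in> prob_simplex"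
  using assms
  by (auto simp: normalize_weights_def prob_simplex_def sum_divide_distrib[symmetric])

lemma proper_loss_normalize_weights_le:
  fixes w :: "'m::finite \<Rightarrow> real"
  assumes proper: "proper_loss l" and w: "\<And>y. 0 \<le> w y" and c: "c \<in> prob_simplex"
    and q: "q \<in> prob_simplex"
  shows "(\<Sum>y\<in>UNIV. w y * l y (normalize_weights w c)) \<le> (\<Sum>y\<in>UNIV. w y * l y q)"
proof (cases "0 < (\<Sum>j\<in>UNIV. w j)")
  case True
  define s where "s = (\<Sum>j\<in>UNIV. w j)"
  define p where "p = normalize_weights w c"
  have p_in: "p \<in> prob_simplex"
    unfolding p_def using w c by (rule normalize_weights_in_prob_simplex)
  have scale: "(\<Sum>y\<in>UNIV. w y * l y r) = s * (\<Sum>y\<in>UNIV. p $ y * l y r)" for r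
    using True by (simp add: p_def s_def normalize_weights_def sum_distrib_left)
  have "(\<Sum>y\<in>UNIV. p $ y * l y p) \<le> (\<Sum>y\<in>UNIV. p $ y * l y q)"
    using proper p_in q unfolding proper_loss_def by blast
  then have "s * (\<Sum>y\<in>UNIV. p $ y * l y p) \<le> s * (\<Sum>y\<in>UNIV. p $ y * l y q)"
    using True s_def by (intro mult_left_mono) auto
  then show ?thesis
    unfolding p_def[symmetric] scale .
next
  case False
  moreover have "0 \<le> (\<Sum>j\<in>UNIV. w j)"
    using w by (simp add: sum_nonneg)
  ultimately have "(\<Sum>j\<in>UNIV. w j) = 0"
    by linarith
  then have "\<And>y. w y = 0"
    using w by (simp add: sum_nonneg_eq_0_iff)
  then show ?thesis by simp
qed

lemma nn_integral_label_indicator: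
  fixes M :: "'a measure" and D :: "('a \<times> 'm) measure" and h :: "'a \<Rightarrow> ennreal"
  assumes sets_D: "sets D = sets (M \<Otimes>\<^sub>M count_space UNIV)"
    and eta_meas: "\<eta> \<in> borel_measurable M"
    and eta_cond: "\<And>A. A \<in> sets M \<Longrightarrow>
          emeasure D (A \<times> {y}) = (\<integral>\<^sup>+ x. ennreal (\<eta> x) * indicator A x \<partial>(distr D M fst))"
    and h: "h \<in> borel_measurable M"
  shows "(\<integral>\<^sup>+ z. h (fst z) * indicator {z. snd z = y} z \<partial>D)
       = (\<integral>\<^sup>+ x. ennreal (\<eta> x) * h x \<partial>(distr D M fst))"
proof -
  have fst_m: "fst \<in> measurable D M"
    using measurable_fst[of M "count_space UNIV"] measurable_cong_sets[OF sets_D refl] by blast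
  have snd_m: "snd \<in> measurable D (count_space UNIV)"
    using measurable_snd[of M "count_space UNIV"] measurable_cong_sets[OF sets_D refl] by blast
  have space_D: "space D = space M \<times> UNIV"
    using sets_eq_imp_space_eq[OF sets_D] by (simp add: space_pair_measure)
  define I :: "'a \<times> 'm \<Rightarrow> ennreal" where "I = indicator {z. snd z = y}"
  have I_m: "I \<in> borel_measurable D"
  proof -
    have "I = (\<lambda>z. indicator {y} (snd z))"
      by (auto simp: I_def indicator_def)
    then show ?thesis by (simp add: measurable_compose[OF snd_m])
  qed
  have slice: "distr (density D I) M fst = density (distr D M fst) \<eta>"
  proof (rule measure_eqI)
    fix A assume "A \<in> sets (distr (density D I) M fst)"
    then have A: "A \<in> sets M" by simp
    have fst_A: "fst -` A \<inter> space D \<in> sets D"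
      using measurable_sets[OF fst_m A] .
    have "A \<times> {y} = (fst -` A \<inter> space D) \<inter> (snd -` {y} \<inter> space D)"
      using sets.sets_into_space[OF A] space_D by auto
    then have A_y: "A \<times> {y} \<in> sets D"
      using fst_A measurable_sets[OF snd_m, of "{y}"] by auto
    have "emeasure (distr (density D I) M fst) A = (\<integral>\<^sup>+ z. I z * indicator (fst -` A \<inter> space D) z \<partial>D)"
      using fst_m A I_m fst_A by (simp add: emeasure_distr emeasure_density)
    also have "\<dots> = (\<integral>\<^sup>+ z. indicator (A \<times> {y}) z \<partial>D)"
      using sets.sets_into_space[OF A] space_D
      by (intro nn_integral_cong) (auto simp: I_def indicator_def)
    also have "\<dots> = emeasure (density (distr D M fst) \<eta>) A"
      using A A_y eta_meas fst_m by (simp add: emeasure_density eta_cond)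
    finally show "emeasure (distr (density D I) M fst) A = emeasure (density (distr D M fst) \<eta>) A" .
  qed simp
  have "(\<integral>\<^sup>+ z. h (fst z) * I z \<partial>D) = (\<integral>\<^sup>+ x. h x \<partial>distr (density D I) M fst)"
    using fst_m h I_m by (simp add: nn_integral_distr nn_integral_density mult.commute)
  also have "\<dots> = (\<integral>\<^sup>+ x. ennreal (\<eta> x) * h x \<partial>(distr D M fst))"
    unfolding slice using eta_meas fst_m h by (simp add: nn_integral_density)
  finally show ?thesis
    unfolding I_def .
qed

lemma class_loss_eq_nn_integral:
  fixes M :: "'a measure" and D :: "('a \<times> 'm::finite) measure"
  assumes D: "finite_measure D"
    and sets_D: "sets D = sets (M \<Otimes>\<^sub>M count_space UNIV)"
    and pi_pos: "class_prior D i > 0"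
    and eta_meas: "\<eta> \<in> borel_measurable M"
    and eta_cond: "\<And>A. A \<in> sets M \<Longrightarrow>
          emeasure D (A \<times> {i}) = (\<integral>\<^sup>+ x. ennreal (\<eta> x) * indicator A x \<partial>(distr D M fst))"
    and loss_meas: "(\<lambda>x. l i (f x)) \<in> borel_measurable M"
  shows "class_loss D l f i
       = (\<integral>\<^sup>+ x. ennreal (\<eta> x) * ennreal (l i (f x)) \<partial>(distr D M fst)) / ennreal (class_prior D i)"
proof -
  have "(\<integral>\<^sup>+ z. ennreal (l (snd z) (f (fst z))) * indicator {z. snd z = i} z \<partial>D)
      = (\<integral>\<^sup>+ z. ennreal (l i (f (fst z))) * indicator {z. snd z = i} z \<partial>D)"
    by (rule nn_integral_cong) (auto simp: indicator_def)
  also have "\<dots> = (\<integral>\<^sup>+ x. ennreal (\<eta> x) * ennreal (l i (f x)) \<partial>(distr D M fst))"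
    using loss_meas by (intro nn_integral_label_indicator[OF sets_D eta_meas eta_cond]) simp_all
  moreover have "emeasure D {z \<in> space D. snd z = i} = ennreal (class_prior D i)"
    unfolding class_prior_def using finite_measure.emeasure_eq_measure[OF D] by simp
  ultimately show ?thesis
    unfolding class_loss_def by simp
qed

lemma weighted_loss_eq_nn_integral:
  fixes M :: "'a measure" and D :: "('a \<times> 'm::finite) measure"
    and \<eta> :: "'m \<Rightarrow> 'a \<Rightarrow> real" and l :: "'m \<Rightarrow> real ^ 'm \<Rightarrow> real" and g :: "real ^ 'm"
  assumes D: "finite_measure D"
    and sets_D: "sets D = sets (M \<Otimes>\<^sub>M count_space UNIV)"
    and pi_pos: "\<And>y. class_prior D y > 0"
    and eta_meas: "\<And>y. \<eta> y \<in> borel_measurable M"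
    and eta_nonneg: "\<And>y x. 0 \<le> \<eta> y x"
    and eta_cond: "\<And>y A. A \<in> sets M \<Longrightarrow>
          emeasure D (A \<times> {y}) = (\<integral>\<^sup>+ x. ennreal (\<eta> y x) * indicator A x \<partial>(distr D M fst))"
    and g_nonneg: "\<And>y. 0 \<le> g $ y"
    and loss_meas: "\<And>y. (\<lambda>x. l y (f x)) \<in> borel_measurable M"
    and loss_nonneg: "\<And>y x. x \<in> space M \<Longrightarrow> 0 \<le> l y (f x)"
  shows "weighted_loss D l g f
       = (\<integral>\<^sup>+ x. ennreal (\<Sum>y\<in>UNIV. g $ y / class_prior D y * \<eta> y x * l y (f x)) \<partial>(distr D M fst))"
proof -
  define w where "w y x = g $ y / class_prior D y * \<eta> y x" for y x
  have w_nonneg: "0 \<le> w y x" for y x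
    unfolding w_def using g_nonneg eta_nonneg less_imp_le[OF pi_pos] by simp
  have scaled_class_loss: "ennreal (g $ y) * class_loss D l f y
      = (\<integral>\<^sup>+ x. ennreal (w y x * l y (f x)) \<partial>(distr D M fst))" for y
  proof -
    have "ennreal (g $ y) * class_loss D l f y
        = ennreal (g $ y / class_prior D y)
          * (\<integral>\<^sup>+ x. ennreal (\<eta> y x) * ennreal (l y (f x)) \<partial>(distr D M fst))"
      using pi_pos[of y] g_nonneg[of y]
      by (simp add: class_loss_eq_nn_integral[OF D sets_D pi_pos eta_meas eta_cond loss_meas]
          divide_ennreal[symmetric] ennreal_times_divide ennreal_divide_times)
    also have "\<dots> = (\<integral>\<^sup>+ x. ennreal (g $ y / class_prior D y) * ennreal (\<eta> y x) * ennreal (l y (f x))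
        \<partial>(distr D M fst))"
      using loss_meas eta_meas by (subst nn_integral_cmult[symmetric]) (auto simp: mult.assoc)
    also have "\<dots> = (\<integral>\<^sup>+ x. ennreal (w y x * l y (f x)) \<partial>(distr D M fst))"
      using g_nonneg[of y] pi_pos[of y] eta_nonneg loss_nonneg
      by (intro nn_integral_cong) (simp add: w_def ennreal_mult[symmetric])
    finally show ?thesis .
  qed
  have "weighted_loss D l g f = (\<Sum>y\<in>UNIV. \<integral>\<^sup>+ x. ennreal (w y x * l y (f x)) \<partial>(distr D M fst))"
    unfolding weighted_loss_def scaled_class_loss ..
  also have "\<dots> = (\<integral>\<^sup>+ x. (\<Sum>y\<in>UNIV. ennreal (w y x * l y (f x))) \<partial>(distr D M fst))"
    using eta_meas loss_meas by (subst nn_integral_sum) (auto simp: w_def)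
  also have "\<dots> = (\<integral>\<^sup>+ x. ennreal (\<Sum>y\<in>UNIV. w y x * l y (f x)) \<partial>(distr D M fst))"
    using w_nonneg loss_nonneg by (intro nn_integral_cong sum_ennreal) simp
  finally show ?thesis
    unfolding w_def .
qed

lemma fstar_eq_normalize_weights:
  "fstar D \<eta> g c x = normalize_weights (\<lambda>y. g $ y / class_prior D y * \<eta> y x) c"
  by (simp add: fstar_def normalize_weights_def Let_def)

lemma fstar_in_prob_simplex:
  assumes "\<And>y. 0 < class_prior D y" and "\<And>y. 0 \<le> \<eta> y x"
    and "g \<in> prob_simplex" and "c \<in> prob_simplex"
  shows "fstar D \<eta> g c x \<in> prob_simplex"
  unfolding fstar_eq_normalize_weights using assms
  by (intro normalize_weights_in_prob_simplex) (auto simp: prob_simplex_def less_imp_le)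

lemma proper_loss_fstar_le:
  assumes "proper_loss l" and "\<And>y. 0 < class_prior D y" and "\<And>y. 0 \<le> \<eta> y x"
    and "g \<in> prob_simplex" and "c \<in> prob_simplex" and "q \<in> prob_simplex"
  shows "(\<Sum>y\<in>UNIV. g $ y / class_prior D y * \<eta> y x * l y (fstar D \<eta> g c x))
       \<le> (\<Sum>y\<in>UNIV. g $ y / class_prior D y * \<eta> y x * l y q)"
  unfolding fstar_eq_normalize_weights using assms
  by (intro proper_loss_normalize_weights_le) (auto simp: prob_simplex_def less_imp_le)

lemma borel_measurable_fstar:
  assumes [measurable]: "\<And>y. \<eta> y \<in> borel_measurable M"
  shows "fstar D \<eta> g c \<in> borel_measurable M"
proof (rule borel_measurable_vecI)
  fix i
  have "(\<lambda>x. fstar D \<eta> g c x $ i) = (\<lambda>x.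
      if 0 < (\<Sum>j\<in>UNIV. g $ j / class_prior D j * \<eta> j x)
      then g $ i / class_prior D i * \<eta> i x / (\<Sum>j\<in>UNIV. g $ j / class_prior D j * \<eta> j x)
      else c $ i)"
    unfolding fstar_eq_normalize_weights normalize_weights_def
    by (simp only: if_distrib[where f = "\<lambda>v. v $ i"] vec_lambda_beta)
  also have "\<dots> \<in> borel_measurable M"
    by measurable
  finally show "(\<lambda>x. fstar D \<eta> g c x $ i) \<in> borel_measurable M" .
qed

theorem lemma1:
  fixes M :: "'a measure"
    and D :: "('a \<times> 'm::finite) measure"
    and \<eta> :: "'m \<Rightarrow> 'a \<Rightarrow> real"
    and l :: "'m \<Rightarrow> real ^ 'm \<Rightarrow> real"
    and g c :: "real ^ 'm"
  assumes D: "prob_space D"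
    and sets_D: "sets D = sets (M \<Otimes>\<^sub>M count_space UNIV)"
    and pi_pos: "\<And>y. class_prior D y > 0"
    and eta_meas: "\<And>y. \<eta> y \<in> borel_measurable M"
    and eta_nonneg: "\<And>y x. 0 \<le> \<eta> y x"
    and eta_cond: "\<And>y A. A \<in> sets M \<Longrightarrow>
          emeasure D (A \<times> {y}) = (\<integral>\<^sup>+ x. ennreal (\<eta> y x) * indicator A x \<partial>(distr D M fst))"
    and proper: "proper_loss l"
    and l_meas: "\<And>y. l y \<in> borel_measurable (restrict_space borel prob_simplex)"
    and g: "g \<in> prob_simplex"
    and c: "c \<in> prob_simplex"
  shows "fstar D \<eta> g c \<in> borel_measurable M \<and>
         (\<forall>x \<in> space M. fstar D \<eta> g c x \<in> prob_simplex) \<and>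
         (\<forall>f. f \<in> borel_measurable M \<longrightarrow> (\<forall>x \<in> space M. f x \<in> prob_simplex) \<longrightarrow>
            weighted_loss D l g (fstar D \<eta> g c) \<le> weighted_loss D l g f)"
proof -
  define L where "L f x = (\<Sum>y\<in>UNIV. g $ y / class_prior D y * \<eta> y x * l y (f x))"
    for f :: "'a \<Rightarrow> real ^ 'm" and x
  have fstar_meas: "fstar D \<eta> g c \<in> borel_measurable M"
    using eta_meas by (rule borel_measurable_fstar)
  have fstar_in: "fstar D \<eta> g c x \<in> prob_simplex" for x
    using pi_pos eta_nonneg g c by (rule fstar_in_prob_simplex)
  have loss_expansion: "weighted_loss D l g f = (\<integral>\<^sup>+ x. ennreal (L f x) \<partial>(distr D M fst))"
    if f: "f \<in> borel_measurable M" "\<forall>x\<in>space M. f x \<in> prob_simplex" for f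
  proof -
    have "(\<lambda>x. l y (f x)) \<in> borel_measurable M" for y
      using l_meas f by (rule borel_measurable_comp_restrict_space)
    moreover have "0 \<le> l y (f x)" if "x \<in> space M" for x y
      using proper f that by (simp add: proper_loss_def)
    ultimately show ?thesis
      unfolding L_def using g
      by (intro weighted_loss_eq_nn_integral[OF prob_space.finite_measure[OF D]
            sets_D pi_pos eta_meas eta_nonneg eta_cond]) (simp_all add: prob_simplex_def)
  qed
  have "weighted_loss D l g (fstar D \<eta> g c) \<le> weighted_loss D l g f"
    if f: "f \<in> borel_measurable M" "\<forall>x\<in>space M. f x \<in> prob_simplex" for f
  proof -
    have "L (fstar D \<eta> g c) x \<le> L f x" if "x \<in> space M" for x
      unfolding L_def using proper pi_pos eta_nonneg g c f that by (intro proper_loss_fstar_le) auto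
    then have "(\<integral>\<^sup>+ x. ennreal (L (fstar D \<eta> g c) x) \<partial>(distr D M fst))
        \<le> (\<integral>\<^sup>+ x. ennreal (L f x) \<partial>(distr D M fst))"
      by (intro nn_integral_mono ennreal_leI) simp
    then show ?thesis
      using f fstar_meas fstar_in by (simp add: loss_expansion)
  qed
  then show ?thesis
    using fstar_meas fstar_in by blast
qed

end
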